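(* Let $G$ be a finitely generated group in which every non-trivial element is a generalized torsion element. Then $G$ decomposes as a free product $G=A\ast B$ with $A$ and $B$ non-trivial if and only if $G$ is isomorphic to the infinite dihedral group $D_{\infty}=\mathbb{Z}_2\ast\mathbb{Z}_2$.
   Context: For $g,x$ in a group, $g^{x}:=xgx^{-1}$. A non-trivial element $g$ of a group $G$ is a generalized torsion element if there exist a positive integer $n$ and $x_1,\ldots,x_n\in G$ with $g^{x_1}g^{x_2}\cdots g^{x_n}=1$. $\mathbb{Z}_2$ denotes the cyclic group of order two. *)

theory Defs
  imports "HOL-Algebra.Algebra"
begin

definition conj_by :: "('g, 'b) monoid_scheme \<Rightarrow> 'g \<Rightarrow> 'g \<Rightarrow> 'g" where
  "conj_by G g x = x \<otimes>\<^bsub>G\<^esub> g \<otimes>\<^bsub>G\<^esub> inv\<^bsub>G\<^esub> x"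

definition list_prod :: "('g, 'b) monoid_scheme \<Rightarrow> 'g list \<Rightarrow> 'g" where
  "list_prod G xs = foldr (\<lambda>a b. a \<otimes>\<^bsub>G\<^esub> b) xs \<one>\<^bsub>G\<^esub>"

definition gen_torsion :: "('g, 'b) monoid_scheme \<Rightarrow> 'g \<Rightarrow> bool" where
  "gen_torsion G g \<longleftrightarrow> g \<in> carrier G \<and> g \<noteq> \<one>\<^bsub>G\<^esub> \<and>
     (\<exists>xs. xs \<noteq> [] \<and> set xs \<subseteq> carrier G \<and>
            list_prod G (map (conj_by G g) xs) = \<one>\<^bsub>G\<^esub>)"

definition fin_gen :: "('g, 'b) monoid_scheme \<Rightarrow> bool" where
  "fin_gen G \<longleftrightarrow> (\<exists>S. finite S \<and> S \<subseteq> carrier G \<and> generate G S = carrier G)"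

text \<open>Internal free product: G = A * B for subgroups A, B, i.e. A and B generate G and
  no non-empty reduced alternating word (letters tagged True from A - {1}, False from
  B - {1}, adjacent tags distinct) evaluates to 1.\<close>
definition free_product_decomp :: "('g, 'b) monoid_scheme \<Rightarrow> 'g set \<Rightarrow> 'g set \<Rightarrow> bool" where
  "free_product_decomp G A B \<longleftrightarrow>
     subgroup A G \<and> subgroup B G \<and> generate G (A \<union> B) = carrier G \<and>
     (\<forall>w :: (bool \<times> 'g) list.
        w \<noteq> [] \<and>
        (\<forall>p \<in> set w. snd p \<noteq> \<one>\<^bsub>G\<^esub> \<and> snd p \<in> (if fst p then A else B)) \<and>
        (\<forall>i. Suc i < length w \<longrightarrow> fst (w ! i) \<noteq> fst (w ! Suc i))
        \<longrightarrow> list_prod G (map snd w) \<noteq> \<one>\<^bsub>G\<^esub>)"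

text \<open>The infinite dihedral group, realised as the isometry group of Z:
  (s, a) stands for x \<mapsto> (-1)^s x + a, with composition as multiplication.\<close>
definition inf_dihedral :: "(bool \<times> int) monoid" where
  "inf_dihedral = \<lparr> carrier = UNIV,
     monoid.mult = (\<lambda>(s, a) (t, b). (s \<noteq> t, a + (if s then - b else b))),
     one = (False, 0) \<rparr>"

end

theory Submission
  imports Defs
begin

(* Suppose G = A * B with both factors nontrivial and A not of order two.  Then A contains
   an element a with a * a <> 1 or two distinct involutions a1, a2.  In either case there are
   x1, x2, x3 in A - {1} and y in B - {1} such that the word w = x1 y x2 occurs at least k
   times in the normal form of g = (x1 y x2 y x3 y)^k but never in that of g^-1 (take
   x1 = x2 = x3 = a, resp. x1 = a1, x2 = a2, x3 = a1 a2).  Brooks' counting function for w is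
   a quasimorphism of G, and a quasimorphism with defect D is at most 7 D on generalized
   torsion elements, because on a product of n conjugates of g it is at least
   n (phi g - 5 D) - D.  So g is not a generalized torsion element once k > 7 D.  Hence both
   factors have order two, and G = Z2 * Z2 is isomorphic to D_infinity, which is itself the
   free product of the two groups generated by the reflections x |-> -x and x |-> 1 - x. *)

lemma list_prod_Nil [simp]: "list_prod G [] = \<one>\<^bsub>G\<^esub>"
  by (simp add: list_prod_def)

lemma list_prod_Cons [simp]: "list_prod G (x # xs) = x \<otimes>\<^bsub>G\<^esub> list_prod G xs"
  by (simp add: list_prod_def)

lemma (in monoid) list_prod_closed [intro, simp]:
  "set xs \<subseteq> carrier G \<Longrightarrow> list_prod G xs \<in> carrier G"
  by (induction xs) auto

lemma (in monoid) list_prod_append: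
  "set xs \<subseteq> carrier G \<Longrightarrow> set ys \<subseteq> carrier G \<Longrightarrow>
   list_prod G (xs @ ys) = list_prod G xs \<otimes> list_prod G ys"
  by (induction xs) (auto simp: m_assoc)

lemma (in group) list_prod_in_generate:
  "set xs \<subseteq> generate G S \<Longrightarrow> list_prod G xs \<in> generate G S"
  by (induction xs) (auto intro: generate.one generate.eng)

lemma (in group_hom) hom_list_prod:
  "set xs \<subseteq> carrier G \<Longrightarrow> h (list_prod G xs) = list_prod H (map h xs)"
  by (induction xs) auto

section \<open>Quasimorphisms and generalized torsion\<close>

definition quasimorphism :: "('g, 'b) monoid_scheme \<Rightarrow> int \<Rightarrow> ('g \<Rightarrow> int) \<Rightarrow> bool" where
  "quasimorphism G D \<phi> \<longleftrightarrow>
     (\<forall>x \<in> carrier G. \<forall>y \<in> carrier G. \<bar>\<phi> (x \<otimes>\<^bsub>G\<^esub> y) - \<phi> x - \<phi> y\<bar> \<le> D)"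

lemma quasimorphismD:
  assumes "quasimorphism G D \<phi>" "x \<in> carrier G" "y \<in> carrier G"
  shows "\<phi> x + \<phi> y - D \<le> \<phi> (x \<otimes>\<^bsub>G\<^esub> y)" "\<phi> (x \<otimes>\<^bsub>G\<^esub> y) \<le> \<phi> x + \<phi> y + D"
proof -
  have "\<bar>\<phi> (x \<otimes>\<^bsub>G\<^esub> y) - \<phi> x - \<phi> y\<bar> \<le> D"
    using assms unfolding quasimorphism_def by blast
  then show "\<phi> x + \<phi> y - D \<le> \<phi> (x \<otimes>\<^bsub>G\<^esub> y)" "\<phi> (x \<otimes>\<^bsub>G\<^esub> y) \<le> \<phi> x + \<phi> y + D"
    by linarith+
qed

context group
begin

lemma quasimorphism_one: "quasimorphism G D \<phi> \<Longrightarrow> \<bar>\<phi> \<one>\<bar> \<le> D"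
  using quasimorphismD[of G D \<phi> \<one> \<one>] by simp

lemma quasimorphism_conj_by_ge:
  assumes "quasimorphism G D \<phi>" "g \<in> carrier G" "x \<in> carrier G"
  shows "\<phi> g - 4 * D \<le> \<phi> (conj_by G g x)"
  using quasimorphism_one[OF assms(1)] quasimorphismD[OF assms(1), of x "inv x"]
    quasimorphismD[OF assms(1), of x g] quasimorphismD[OF assms(1), of "x \<otimes> g" "inv x"] assms(2,3)
  unfolding conj_by_def by simp

lemma quasimorphism_conj_by_prod_ge:
  assumes "quasimorphism G D \<phi>" "g \<in> carrier G" "set xs \<subseteq> carrier G"
  shows "int (length xs) * (\<phi> g - 5 * D) - D \<le> \<phi> (list_prod G (map (conj_by G g) xs))"
  using assms(3)
proof (induction xs)
  case Nil
  then show ?case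
    using quasimorphism_one[OF assms(1)] by simp
next
  case (Cons x xs)
  let ?c = "conj_by G g x" and ?p = "list_prod G (map (conj_by G g) xs)"
  have "set (map (conj_by G g) xs) \<subseteq> carrier G"
    using Cons.prems assms(2) by (auto simp: conj_by_def)
  then have "?c \<in> carrier G" "?p \<in> carrier G"
    using Cons.prems assms(2) by (auto simp: conj_by_def)
  then have "\<phi> ?c + \<phi> ?p - D \<le> \<phi> (?c \<otimes> ?p)"
    by (intro quasimorphismD[OF assms(1)])
  moreover have "\<phi> g - 4 * D \<le> \<phi> ?c"
    using Cons.prems assms(1,2) by (simp add: quasimorphism_conj_by_ge)
  ultimately show ?case
    using Cons by (simp add: algebra_simps)
qed

lemma quasimorphism_gen_torsion_le:
  assumes "quasimorphism G D \<phi>" "gen_torsion G g"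
  shows "\<phi> g \<le> 7 * D"
proof (rule ccontr)
  assume large: "\<not> \<phi> g \<le> 7 * D"
  obtain xs where xs: "xs \<noteq> []" "set xs \<subseteq> carrier G" "list_prod G (map (conj_by G g) xs) = \<one>"
    and "g \<in> carrier G"
    using assms(2) unfolding gen_torsion_def by blast
  then have "int (length xs) * (\<phi> g - 5 * D) - D \<le> \<phi> \<one>"
    using quasimorphism_conj_by_prod_ge[OF assms(1), of g xs] by simp
  moreover have one: "\<bar>\<phi> \<one>\<bar> \<le> D"
    using assms(1) by (rule quasimorphism_one)
  moreover have "\<phi> g - 5 * D \<le> int (length xs) * (\<phi> g - 5 * D)"
  proof -
    have "0 < \<phi> g - 5 * D"
      using large one by linarith
    moreover have "1 \<le> int (length xs)"
      using xs(1) by (cases xs) auto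
    ultimately show ?thesis
      using mult_right_mono[of 1 "int (length xs)" "\<phi> g - 5 * D"] by simp
  qed
  ultimately show False
    using large by simp
qed

end

fun occurrences :: "'a list \<Rightarrow> 'a list \<Rightarrow> nat" where
  "occurrences w [] = 0"
| "occurrences w (x # xs) = (if take (length w) (x # xs) = w then 1 else 0) + occurrences w xs"

lemma occurrences_append_ge: "occurrences w xs + occurrences w ys \<le> occurrences w (xs @ ys)"
proof (induction xs)
  case (Cons x xs)
  have "take (length w) (x # xs @ ys) = w" if "take (length w) (x # xs) = w"
  proof -
    have "length w \<le> length (x # xs)"
      using arg_cong[OF that, of length] by simp
    then show ?thesis
      using that by (simp flip: append_Cons)
  qed
  then show ?case
    using Cons by auto
qed simp

lemma occurrences_append_le:
  "occurrences w (xs @ ys) \<le> occurrences w xs + occurrences w ys + length w"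
proof (induction xs)
  case (Cons x xs)
  show ?case
  proof (cases "length w \<le> length (x # xs)")
    case True
    then have "take (length w) (x # xs @ ys) = take (length w) (x # xs)"
      by (simp flip: append_Cons)
    then show ?thesis
      using Cons by simp
  next
    case False
    have short: "occurrences w (zs @ ys) \<le> length zs + occurrences w ys" for zs
      by (induction zs) auto
    show ?thesis
      using False short[of "x # xs"] by simp
  qed
qed simp

lemma occurrences_singleton: "2 \<le> length w \<Longrightarrow> occurrences w [x] = 0"
  by (cases w) auto

lemma occurrences_concat_replicate:
  "n * occurrences w u \<le> occurrences w (concat (replicate n u))"
proof (induction n)
  case (Suc n)
  then show ?case
    using occurrences_append_ge[of w u "concat (replicate n u)"] by simp
qed simp

lemma occurrences_concat_replicate_eq_0:
  assumes "(a\<^sub>1, b, a\<^sub>2) \<notin> {(c\<^sub>3, d, c\<^sub>2), (c\<^sub>2, d, c\<^sub>1), (c\<^sub>1, d, c\<^sub>3)}"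
  shows "occurrences [(True, a\<^sub>1), (False, b), (True, a\<^sub>2)]
    (concat (replicate n
      [(False, d), (True, c\<^sub>3), (False, d), (True, c\<^sub>2), (False, d), (True, c\<^sub>1)])) = 0"
proof -
  let ?w = "[(True, a\<^sub>1), (False, b), (True, a\<^sub>2)]"
    and ?v = "[(False, d), (True, c\<^sub>3), (False, d), (True, c\<^sub>2), (False, d), (True, c\<^sub>1)]"
  have "\<not> (c\<^sub>3 = a\<^sub>1 \<and> d = b \<and> c\<^sub>2 = a\<^sub>2)" "\<not> (c\<^sub>2 = a\<^sub>1 \<and> d = b \<and> c\<^sub>1 = a\<^sub>2)"
    "\<not> (c\<^sub>1 = a\<^sub>1 \<and> d = b \<and> c\<^sub>3 = a\<^sub>2)"
    using assms by auto
  then have "occurrences ?w ?v = 0"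
    "occurrences ?w (?v @ (False, d) # (True, c\<^sub>3) # vs) =
       occurrences ?w ((False, d) # (True, c\<^sub>3) # vs)" for vs
    by simp_all
  then show ?thesis
  proof (induction n)
    case (Suc n)
    show ?case
    proof (cases n)
      case (Suc m)
      have "concat (replicate n ?v) =
          (False, d) # (True, c\<^sub>3) # (drop 2 ?v @ concat (replicate m ?v))"
        unfolding Suc by simp
      then have "occurrences ?w (?v @ concat (replicate n ?v)) =
          occurrences ?w (concat (replicate n ?v))"
        using Suc.prems(2) by (simp only:)
      then show ?thesis
        using Suc.IH Suc.prems by simp
    qed (use Suc.prems in simp)
  qed simp
qed

section \<open>Normal forms in free products\<close>

locale free_product = group G for G :: "('g, 'b) monoid_scheme" (structure) +
  fixes A B :: "'g set"
  assumes free_product_decomp: "free_product_decomp G A B"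
begin

lemma subgroup_A: "subgroup A G"
  and subgroup_B: "subgroup B G"
  and generate_A_B: "generate G (A \<union> B) = carrier G"
  using free_product_decomp by (auto simp: free_product_decomp_def)

definition syllable :: "bool \<times> 'g \<Rightarrow> bool" where
  "syllable p \<longleftrightarrow> snd p \<noteq> \<one> \<and> snd p \<in> (if fst p then A else B)"

definition reduced :: "(bool \<times> 'g) list \<Rightarrow> bool" where
  "reduced w \<longleftrightarrow> (\<forall>p \<in> set w. syllable p) \<and> distinct_adj (map fst w)"

definition word_eval :: "(bool \<times> 'g) list \<Rightarrow> 'g" where
  "word_eval w = list_prod G (map snd w)"

definition word_inv :: "(bool \<times> 'g) list \<Rightarrow> (bool \<times> 'g) list" where
  "word_inv w = rev (map (\<lambda>(b, a). (b, inv a)) w)"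

lemma reduced_word_eval_neq_one: "reduced w \<Longrightarrow> w \<noteq> [] \<Longrightarrow> word_eval w \<noteq> \<one>"
  using free_product_decomp
  unfolding free_product_decomp_def reduced_def syllable_def word_eval_def distinct_adj_conv_nth
  by auto

lemma syllable_closed: "syllable p \<Longrightarrow> snd p \<in> carrier G"
  using subgroup.mem_carrier[OF subgroup_A] subgroup.mem_carrier[OF subgroup_B]
  by (auto simp: syllable_def split: if_splits)

lemma reduced_closed: "reduced w \<Longrightarrow> snd ` set w \<subseteq> carrier G"
  using syllable_closed by (auto simp: reduced_def)

lemma syllable_inv: "syllable p \<Longrightarrow> syllable (fst p, inv (snd p))"
  using subgroup.m_inv_closed[OF subgroup_A] subgroup.m_inv_closed[OF subgroup_B] syllable_closed[of p]
  by (auto simp: syllable_def split: if_splits)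

lemma reduced_Nil [simp]: "reduced []"
  by (simp add: reduced_def)

lemma reduced_Cons:
  "reduced (p # w) \<longleftrightarrow> syllable p \<and> reduced w \<and> (w \<noteq> [] \<longrightarrow> fst p \<noteq> fst (hd w))"
  by (auto simp: reduced_def distinct_adj_Cons hd_map)

lemma reduced_append:
  "reduced (u @ v) \<longleftrightarrow>
     reduced u \<and> reduced v \<and> (u \<noteq> [] \<longrightarrow> v \<noteq> [] \<longrightarrow> fst (last u) \<noteq> fst (hd v))"
  by (auto simp: reduced_def distinct_adj_append_iff last_map hd_map)

lemma reduced_word_inv:
  assumes "reduced w"
  shows "reduced (word_inv w)"
proof -
  have "map fst (word_inv w) = rev (map fst w)"
    by (simp add: word_inv_def rev_map comp_def split_beta)
  then show ?thesis
    using assms syllable_inv by (auto simp: reduced_def word_inv_def)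
qed

lemma word_eval_Nil [simp]: "word_eval [] = \<one>"
  by (simp add: word_eval_def)

lemma word_eval_Cons: "word_eval (p # w) = snd p \<otimes> word_eval w"
  by (simp add: word_eval_def)

lemma word_eval_closed: "snd ` set w \<subseteq> carrier G \<Longrightarrow> word_eval w \<in> carrier G"
  by (auto simp: word_eval_def)

lemma word_eval_append:
  "snd ` set u \<subseteq> carrier G \<Longrightarrow> snd ` set v \<subseteq> carrier G \<Longrightarrow>
   word_eval (u @ v) = word_eval u \<otimes> word_eval v"
  by (simp add: word_eval_def list_prod_append)

lemma word_inv_Nil [simp]: "word_inv [] = []"
  and word_inv_Cons: "word_inv (p # w) = word_inv w @ [(fst p, inv (snd p))]"
  and word_inv_append: "word_inv (u @ v) = word_inv v @ word_inv u"
  by (simp_all add: word_inv_def split_beta)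

lemma word_inv_closed: "snd ` set w \<subseteq> carrier G \<Longrightarrow> snd ` set (word_inv w) \<subseteq> carrier G"
  by (auto simp: word_inv_def)

lemma word_inv_word_inv: "snd ` set w \<subseteq> carrier G \<Longrightarrow> word_inv (word_inv w) = w"
  by (induction w) (auto simp: word_inv_def)

lemma word_eval_word_inv:
  "snd ` set w \<subseteq> carrier G \<Longrightarrow> word_eval (word_inv w) = inv (word_eval w)"
proof (induction w)
  case (Cons p w)
  then have "snd p \<in> carrier G" "snd ` set w \<subseteq> carrier G"
    by auto
  with Cons.IH show ?case
    by (simp add: word_inv_Cons word_eval_append word_inv_closed word_eval_Cons word_eval_closed
        inv_mult_group)
qed simp

definition joins :: "(bool \<times> 'g) list \<Rightarrow> (bool \<times> 'g) list \<Rightarrow> (bool \<times> 'g) list \<Rightarrow> bool" where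
  "joins P Q R \<longleftrightarrow> R = P @ Q \<or>
     (\<exists>P' Q' b c d. P = P' @ [(b, c)] \<and> Q = (b, d) # Q' \<and> R = P' @ [(b, c \<otimes> d)] @ Q')"

lemma merge_syllables:
  assumes "reduced (u @ [(b, c)])" "reduced ((b, d) # v)" "c \<otimes> d \<noteq> \<one>"
  shows "reduced (u @ [(b, c \<otimes> d)] @ v)"
    and "word_eval (u @ [(b, c \<otimes> d)] @ v) = word_eval (u @ [(b, c)]) \<otimes> word_eval ((b, d) # v)"
    and "joins (u @ [(b, c)]) ((b, d) # v) (u @ [(b, c \<otimes> d)] @ v)"
proof -
  have "syllable (b, c)" "syllable (b, d)"
    using assms(1,2) by (auto simp: reduced_append reduced_Cons)
  then have "syllable (b, c \<otimes> d)"
    using assms(3) subgroup.m_closed[OF subgroup_A] subgroup.m_closed[OF subgroup_B]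
    by (auto simp: syllable_def split: if_splits)
  with assms show "reduced (u @ [(b, c \<otimes> d)] @ v)"
    by (auto simp: reduced_append reduced_Cons)
  have "snd ` set u \<subseteq> carrier G" "c \<in> carrier G" "d \<in> carrier G" "snd ` set v \<subseteq> carrier G"
    using reduced_closed[OF assms(1)] reduced_closed[OF assms(2)] by auto
  then show "word_eval (u @ [(b, c \<otimes> d)] @ v) = word_eval (u @ [(b, c)]) \<otimes> word_eval ((b, d) # v)"
    by (simp add: word_eval_append word_eval_Cons word_eval_closed m_assoc)
  show "joins (u @ [(b, c)]) ((b, d) # v) (u @ [(b, c \<otimes> d)] @ v)"
    unfolding joins_def by blast
qed

lemma cancel_syllables:
  assumes "reduced (u @ [(b, c)])" "reduced ((b, d) # v)" "c \<otimes> d = \<one>"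
  shows "(b, d) # v = word_inv [(b, c)] @ v"
    and "word_eval u \<otimes> word_eval v = word_eval (u @ [(b, c)]) \<otimes> word_eval ((b, d) # v)"
proof -
  have closed: "snd ` set u \<subseteq> carrier G" "c \<in> carrier G" "d \<in> carrier G" "snd ` set v \<subseteq> carrier G"
    using reduced_closed[OF assms(1)] reduced_closed[OF assms(2)] by auto
  then have "inv c = d"
    using inv_equality[OF inv_comm[OF assms(3)]] by simp
  then show "(b, d) # v = word_inv [(b, c)] @ v"
    by (simp add: word_inv_Cons)
  have "word_eval (u @ [(b, c)]) \<otimes> word_eval ((b, d) # v) = word_eval u \<otimes> (c \<otimes> d) \<otimes> word_eval v"
    using closed by (simp add: word_eval_append word_eval_Cons word_eval_closed m_assoc)
  then show "word_eval u \<otimes> word_eval v = word_eval (u @ [(b, c)]) \<otimes> word_eval ((b, d) # v)"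
    using closed assms(3) by (simp add: word_eval_closed)
qed

lemma reduced_product_decomp:
  assumes "reduced u" "reduced v"
  shows "\<exists>P Z Q R. u = P @ Z \<and> v = word_inv Z @ Q \<and> reduced R \<and>
    word_eval R = word_eval u \<otimes> word_eval v \<and> joins P Q R"
  using assms
proof (induction u arbitrary: v rule: rev_induct)
  case Nil
  show ?case
    by (rule exI[of _ "[]"], rule exI[of _ "[]"], rule exI[of _ v], rule exI[of _ v])
      (use Nil in \<open>auto simp: joins_def word_eval_closed reduced_closed\<close>)
next
  case (snoc x u)
  obtain b c where x: "x = (b, c)"
    by fastforce
  have witness: "u @ [x] = P @ Z \<Longrightarrow> v = word_inv Z @ Q \<Longrightarrow> reduced R \<Longrightarrow>
      word_eval R = word_eval (u @ [x]) \<otimes> word_eval v \<Longrightarrow> joins P Q R \<Longrightarrow> ?case" for P Z Q R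
    by blast
  consider (seam) "v = [] \<or> fst (hd v) \<noteq> b"
    | (cancel) d v' where "v = (b, d) # v'" "c \<otimes> d = \<one>"
    | (merge) d v' where "v = (b, d) # v'" "c \<otimes> d \<noteq> \<one>"
    by (cases v) (auto, metis (full_types))
  then show ?case
  proof cases
    case seam
    then have "reduced ((u @ [x]) @ v)"
      using snoc.prems x by (subst reduced_append) auto
    moreover have "word_eval ((u @ [x]) @ v) = word_eval (u @ [x]) \<otimes> word_eval v"
      using reduced_closed[OF snoc.prems(1)] reduced_closed[OF snoc.prems(2)]
      by (rule word_eval_append)
    ultimately show ?thesis
      by (intro witness[of "u @ [x]" "[]" v "(u @ [x]) @ v"]) (simp_all add: joins_def)
  next
    case (cancel d v')
    have "reduced u" "reduced v'"
      using snoc.prems cancel(1) by (auto simp: reduced_append reduced_Cons)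
    then obtain P Z Q R where "u = P @ Z" "v' = word_inv Z @ Q" "reduced R"
      "word_eval R = word_eval u \<otimes> word_eval v'" "joins P Q R"
      using snoc.IH by blast
    then show ?thesis
      using cancel_syllables[of u b c d v'] snoc.prems cancel x
      by (intro witness[of P "Z @ [x]" Q R]) (simp_all add: word_inv_append)
  next
    case (merge d v')
    then show ?thesis
      using merge_syllables[of u b c d v'] snoc.prems x
      by (intro witness[of "u @ [x]" "[]" v "u @ [(b, c \<otimes> d)] @ v'"]) simp_all
  qed
qed

lemma reduced_word_unique:
  assumes "reduced w" "reduced w'" "word_eval w = word_eval w'"
  shows "w = w'"
proof -
  have closed: "snd ` set w \<subseteq> carrier G" "snd ` set w' \<subseteq> carrier G"
    using assms reduced_closed by auto
  obtain P Z Q R where split: "w = P @ Z" "word_inv w' = word_inv Z @ Q" and "reduced R"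
    and R: "word_eval R = word_eval w \<otimes> word_eval (word_inv w')" "joins P Q R"
    using reduced_product_decomp[OF assms(1) reduced_word_inv[OF assms(2)]] by blast
  have "word_eval R = \<one>"
    using R(1) assms(3) closed by (simp add: word_eval_word_inv word_eval_closed)
  then have "R = []"
    using reduced_word_eval_neq_one \<open>reduced R\<close> by blast
  then have "w = Z" "word_inv w' = word_inv Z"
    using R(2) split by (auto simp: joins_def)
  then show ?thesis
    using closed word_inv_word_inv by metis
qed

lemma reduced_word_exists:
  assumes "x \<in> carrier G"
  shows "\<exists>w. reduced w \<and> word_eval w = x"
proof -
  have syllable_word: "\<exists>w. reduced w \<and> word_eval w = a" if "a \<in> A \<union> B" for a
  proof (cases "a = \<one>")
    case False
    then have "reduced [(a \<in> A, a)]"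
      using that by (auto simp: reduced_Cons syllable_def)
    moreover have "a \<in> carrier G"
      using that subgroup.mem_carrier[OF subgroup_A] subgroup.mem_carrier[OF subgroup_B] by auto
    ultimately show ?thesis
      by (intro exI[of _ "[(a \<in> A, a)]"]) (simp add: word_eval_Cons)
  qed (intro exI[of _ "[]"], simp)
  have "x \<in> generate G (A \<union> B)"
    using assms generate_A_B by simp
  then show ?thesis
  proof (induction rule: generate.induct)
    case one
    then show ?case
      by (intro exI[of _ "[]"]) simp
  next
    case (incl a)
    then show ?case
      by (rule syllable_word)
  next
    case (inv a)
    then show ?case
      using syllable_word subgroup.m_inv_closed[OF subgroup_A] subgroup.m_inv_closed[OF subgroup_B]
      by blast
  next
    case (eng a a')
    then obtain w w' where w: "reduced w" "word_eval w = a" "reduced w'" "word_eval w' = a'"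
      by blast
    then obtain R where "reduced R" "word_eval R = a \<otimes> a'"
      using reduced_product_decomp[of w w'] by blast
    then show ?case
      by blast
  qed
qed

definition normal_form :: "'g \<Rightarrow> (bool \<times> 'g) list" where
  "normal_form x = (SOME w. reduced w \<and> word_eval w = x)"

lemma normal_form:
  assumes "x \<in> carrier G"
  shows reduced_normal_form: "reduced (normal_form x)"
    and word_eval_normal_form: "word_eval (normal_form x) = x"
  using someI_ex[OF reduced_word_exists[OF assms]] unfolding normal_form_def by auto

lemma normal_form_word_eval:
  assumes "reduced w"
  shows "normal_form (word_eval w) = w"
proof -
  have "word_eval w \<in> carrier G"
    using assms reduced_closed word_eval_closed by blast
  then show ?thesis
    using assms reduced_word_unique normal_form by blast
qed

lemma normal_form_mult:
  assumes "x \<in> carrier G" "y \<in> carrier G"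
  obtains P Z Q where "normal_form x = P @ Z" "normal_form y = word_inv Z @ Q"
    "joins P Q (normal_form (x \<otimes> y))"
proof -
  obtain P Z Q R where split: "normal_form x = P @ Z" "normal_form y = word_inv Z @ Q"
    and R: "reduced R" "word_eval R = word_eval (normal_form x) \<otimes> word_eval (normal_form y)"
    "joins P Q R"
    using reduced_product_decomp[OF reduced_normal_form reduced_normal_form] assms by blast
  have "normal_form (x \<otimes> y) = R"
    using R(2) normal_form_word_eval[OF R(1)] assms by (simp add: word_eval_normal_form)
  then show ?thesis
    using that[OF split] R(3) by blast
qed

lemma reduced_concat_replicate:
  assumes "reduced u" "fst (hd u) \<noteq> fst (last u)"
  shows "reduced (concat (replicate n u))"
proof (induction n)
  case (Suc n)
  have "hd (concat (replicate n u)) = hd u" if "n \<noteq> 0" "u \<noteq> []"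
    using that by (cases n) auto
  with Suc assms show ?case
    by (auto simp: reduced_append)
qed simp

lemma word_inv_concat_replicate:
  "word_inv (concat (replicate n u)) = concat (replicate n (word_inv u))"
proof -
  have "concat (replicate n v) @ v = v @ concat (replicate n v)" for v :: "(bool \<times> 'g) list"
    by (induction n) auto
  then show ?thesis
    by (induction n) (simp_all add: word_inv_append)
qed

end

lemma free_product_decomp_swap:
  assumes "free_product_decomp G A B"
  shows "free_product_decomp G B A"
proof -
  have reduced_neq_one: "list_prod G (map snd w) \<noteq> \<one>\<^bsub>G\<^esub>"
    if "w \<noteq> []" "\<forall>p \<in> set w. snd p \<noteq> \<one>\<^bsub>G\<^esub> \<and> snd p \<in> (if fst p then A else B)"
      "\<forall>i. Suc i < length w \<longrightarrow> fst (w ! i) \<noteq> fst (w ! Suc i)" for w :: "(bool \<times> _) list"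
    using assms that unfolding free_product_decomp_def by blast
  show ?thesis
    unfolding free_product_decomp_def
  proof (intro conjI allI impI)
    fix w :: "(bool \<times> _) list"
    assume w: "w \<noteq> [] \<and> (\<forall>p \<in> set w. snd p \<noteq> \<one>\<^bsub>G\<^esub> \<and> snd p \<in> (if fst p then B else A)) \<and>
      (\<forall>i. Suc i < length w \<longrightarrow> fst (w ! i) \<noteq> fst (w ! Suc i))"
    have "list_prod G (map snd (map (\<lambda>p. (\<not> fst p, snd p)) w)) \<noteq> \<one>\<^bsub>G\<^esub>"
      by (rule reduced_neq_one) (use w in auto)
    then show "list_prod G (map snd w) \<noteq> \<one>\<^bsub>G\<^esub>"
      by (simp add: comp_def)
  qed (use assms in \<open>auto simp: free_product_decomp_def Un_commute\<close>)
qed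

lemma free_productI: "group G \<Longrightarrow> free_product_decomp G A B \<Longrightarrow> free_product G A B"
  by (simp add: free_product_def free_product_axioms_def)

section \<open>Brooks quasimorphisms on free products\<close>

context free_product
begin

text \<open>Brooks' counting quasimorphism: occurrences of \<open>w\<close> in the normal form of \<open>x\<close> minus those in
  the normal form \<open>word_inv (normal_form x)\<close> of \<open>x\<inverse>\<close>.\<close>

definition brooks_count :: "(bool \<times> 'g) list \<Rightarrow> (bool \<times> 'g) list \<Rightarrow> int" where
  "brooks_count w u = int (occurrences w u) - int (occurrences w (word_inv u))"

definition brooks :: "(bool \<times> 'g) list \<Rightarrow> 'g \<Rightarrow> int" where
  "brooks w x = brooks_count w (normal_form x)"

lemma brooks_count_append:
  "\<bar>brooks_count w (u @ v) - brooks_count w u - brooks_count w v\<bar> \<le> 2 * int (length w)"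
  using occurrences_append_ge[of w u v] occurrences_append_le[of w u v]
    occurrences_append_ge[of w "word_inv v" "word_inv u"]
    occurrences_append_le[of w "word_inv v" "word_inv u"]
  unfolding brooks_count_def word_inv_append by linarith

lemma brooks_count_singleton:
  assumes "2 \<le> length w"
  shows "brooks_count w [p] = 0"
proof -
  have "word_inv [p] = [(fst p, inv (snd p))]"
    by (simp add: word_inv_def split_beta)
  then show ?thesis
    unfolding brooks_count_def using occurrences_singleton[OF assms] by simp
qed

lemma brooks_count_word_inv:
  "snd ` set u \<subseteq> carrier G \<Longrightarrow> brooks_count w (word_inv u) = - brooks_count w u"
  by (simp add: brooks_count_def word_inv_word_inv)

lemma brooks_count_joins:
  assumes "2 \<le> length w" "joins P Q R"
  shows "\<bar>brooks_count w R - brooks_count w P - brooks_count w Q\<bar> \<le> 8 * int (length w)"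
  using assms(2) unfolding joins_def
proof
  assume "R = P @ Q"
  then show ?thesis
    using brooks_count_append[of w P Q] by simp
next
  assume "\<exists>P' Q' b c d. P = P' @ [(b, c)] \<and> Q = (b, d) # Q' \<and> R = P' @ [(b, c \<otimes> d)] @ Q'"
  then obtain P' Q' b c d where "P = P' @ [(b, c)]" "Q = [(b, d)] @ Q'" "R = P' @ ([(b, c \<otimes> d)] @ Q')"
    by auto
  then show ?thesis
    using brooks_count_append[of w P' "[(b, c)]"] brooks_count_append[of w "[(b, d)]" Q']
      brooks_count_append[of w P' "[(b, c \<otimes> d)] @ Q'"] brooks_count_append[of w "[(b, c \<otimes> d)]" Q']
      brooks_count_singleton[OF assms(1)]
    by simp
qed

lemma brooks_quasimorphism:
  assumes "2 \<le> length w"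
  shows "quasimorphism G (12 * int (length w)) (brooks w)"
  unfolding quasimorphism_def
proof (intro ballI)
  fix x y
  assume "x \<in> carrier G" "y \<in> carrier G"
  then obtain P Z Q where x: "normal_form x = P @ Z" and y: "normal_form y = word_inv Z @ Q"
    and xy: "joins P Q (normal_form (x \<otimes> y))"
    by (rule normal_form_mult)
  have "snd ` set Z \<subseteq> carrier G"
    using x reduced_normal_form[OF \<open>x \<in> carrier G\<close>] reduced_closed by fastforce
  then show "\<bar>brooks w (x \<otimes> y) - brooks w x - brooks w y\<bar> \<le> 12 * int (length w)"
    unfolding brooks_def x y
    using brooks_count_append[of w P Z] brooks_count_append[of w "word_inv Z" Q]
      brooks_count_joins[OF assms xy] brooks_count_word_inv[of Z w]
    by simp
qed

text \<open>The condition on \<open>x\<^sub>1, x\<^sub>2, x\<^sub>3, y\<close> says that \<open>w = x\<^sub>1 y x\<^sub>2\<close> never occurs in the powers of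
  \<open>(x\<^sub>1 y x\<^sub>2 y x\<^sub>3 y)\<inverse>\<close>, while it occurs at least \<open>k\<close> times in the \<open>k\<close>-th power of
  \<open>x\<^sub>1 y x\<^sub>2 y x\<^sub>3 y\<close>.\<close>

lemma brooks_unbounded:
  assumes "x\<^sub>1 \<in> A - {\<one>}" "x\<^sub>2 \<in> A - {\<one>}" "x\<^sub>3 \<in> A - {\<one>}" "y \<in> B - {\<one>}"
    and "(x\<^sub>1, y, x\<^sub>2) \<notin> {(inv x\<^sub>3, inv y, inv x\<^sub>2), (inv x\<^sub>2, inv y, inv x\<^sub>1), (inv x\<^sub>1, inv y, inv x\<^sub>3)}"
  shows "\<exists>g \<in> carrier G. g \<noteq> \<one> \<and> int k \<le> brooks [(True, x\<^sub>1), (False, y), (True, x\<^sub>2)] g"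
proof -
  define w where "w = [(True, x\<^sub>1), (False, y), (True, x\<^sub>2)]"
  define U where "U = [(True, x\<^sub>1), (False, y), (True, x\<^sub>2), (False, y), (True, x\<^sub>3), (False, y)]"
  define u where "u = concat (replicate (Suc k) U)"
  have "reduced U"
    using assms(1-4) unfolding U_def by (simp add: reduced_Cons syllable_def)
  then have "reduced u"
    unfolding u_def by (rule reduced_concat_replicate) (simp add: U_def)
  have "snd ` set U \<subseteq> carrier G"
    using \<open>reduced U\<close> reduced_closed by blast
  then have "word_inv U =
      [(False, inv y), (True, inv x\<^sub>3), (False, inv y), (True, inv x\<^sub>2), (False, inv y), (True, inv x\<^sub>1)]"
    unfolding U_def by (simp add: word_inv_def)
  then have "occurrences w (word_inv u) = 0"
    unfolding u_def w_def word_inv_concat_replicate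
    by (simp only: occurrences_concat_replicate_eq_0[OF assms(5)])
  moreover have "Suc k \<le> occurrences w u"
    using occurrences_concat_replicate[of "Suc k" w U] unfolding u_def
    by (simp add: U_def w_def)
  ultimately have "int k \<le> brooks w (word_eval u)"
    by (simp add: brooks_def brooks_count_def normal_form_word_eval[OF \<open>reduced u\<close>])
  moreover have "word_eval u \<in> carrier G"
    using \<open>reduced u\<close> reduced_closed word_eval_closed by blast
  moreover have "word_eval u \<noteq> \<one>"
    using \<open>reduced u\<close> reduced_word_eval_neq_one by (simp add: u_def U_def)
  ultimately show ?thesis
    unfolding w_def by blast
qed

lemma exists_not_gen_torsion:
  assumes "x\<^sub>1 \<in> A - {\<one>}" "x\<^sub>2 \<in> A - {\<one>}" "x\<^sub>3 \<in> A - {\<one>}" "y \<in> B - {\<one>}"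
    and "(x\<^sub>1, y, x\<^sub>2) \<notin> {(inv x\<^sub>3, inv y, inv x\<^sub>2), (inv x\<^sub>2, inv y, inv x\<^sub>1), (inv x\<^sub>1, inv y, inv x\<^sub>3)}"
  shows "\<exists>g \<in> carrier G. g \<noteq> \<one> \<and> \<not> gen_torsion G g"
proof -
  let ?w = "[(True, x\<^sub>1), (False, y), (True, x\<^sub>2)]"
  obtain g where "g \<in> carrier G" "g \<noteq> \<one>" "int (Suc (7 * 36)) \<le> brooks ?w g"
    using brooks_unbounded[OF assms] by blast
  moreover have "quasimorphism G 36 (brooks ?w)"
    using brooks_quasimorphism[of ?w] by simp
  ultimately show ?thesis
    using quasimorphism_gen_torsion_le by fastforce
qed

lemma factor_order_two:
  assumes "B \<noteq> {\<one>}" "\<forall>g \<in> carrier G. g \<noteq> \<one> \<longrightarrow> gen_torsion G g" "s \<in> A" "s \<noteq> \<one>"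
  shows "A = {\<one>, s}" "s \<otimes> s = \<one>"
proof -
  obtain y where y: "y \<in> B - {\<one>}"
    using assms(1) subgroup.one_closed[OF subgroup_B] by blast
  have closed: "a \<in> carrier G" if "a \<in> A" for a
    using that subgroup.mem_carrier[OF subgroup_A] by blast
  have involution: "a \<otimes> a = \<one>" if "a \<in> A" for a
  proof (rule ccontr)
    assume "a \<otimes> a \<noteq> \<one>"
    then have "a \<in> A - {\<one>}" "inv a \<noteq> a"
      using that r_inv[OF closed[OF that]] by auto
    then show False
      using exists_not_gen_torsion[of a a a y] y assms(2) by auto
  qed
  have "a = s" if "a \<in> A - {\<one>}" for a
  proof (rule ccontr)
    assume "a \<noteq> s"
    have inv_self: "inv b = b" if "b \<in> A" for b
      using involution[OF that] closed[OF that] inv_equality by blast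
    have "s \<otimes> a \<in> A - {\<one>}"
      using \<open>a \<noteq> s\<close> that assms(3,4) inv_self subgroup.m_closed[OF subgroup_A] closed
      by (metis DiffD1 DiffI inv_equality singletonD)
    moreover have "s \<otimes> a \<noteq> s" "s \<otimes> a \<noteq> a"
      using that assms(3,4) closed by auto
    ultimately show False
      using exists_not_gen_torsion[of s a "s \<otimes> a" y] y assms(2-4) that \<open>a \<noteq> s\<close>
      by (auto simp: inv_self)
  qed
  then show "A = {\<one>, s}"
    using assms(3) subgroup.one_closed[OF subgroup_A] by blast
  show "s \<otimes> s = \<one>"
    using involution[OF assms(3)] .
qed

end

section \<open>Isomorphisms of free products\<close>

lemma free_product_decomp_iso:
  assumes "free_product_decomp G A B" "h \<in> iso G H" "group G" "group H"
  shows "free_product_decomp H (h ` A) (h ` B)"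
proof -
  interpret free_product G A B
    using assms(3,1) by (rule free_productI)
  interpret h: group_hom G H h
    using assms(2-4) by (simp add: group_hom_def group_hom_axioms_def iso_iff)
  have inj: "inj_on h (carrier G)" and surj: "h ` carrier G = carrier H"
    using assms(2) by (auto simp: iso_iff)
  have closed: "A \<union> B \<subseteq> carrier G"
    using subgroup.subset[OF subgroup_A] subgroup.subset[OF subgroup_B] by blast
  show ?thesis
    unfolding free_product_decomp_def
  proof (intro conjI allI impI)
    show "subgroup (h ` A) H" "subgroup (h ` B) H"
      using h.subgroup_img_is_subgroup subgroup_A subgroup_B by auto
    show "generate H (h ` A \<union> h ` B) = carrier H"
      using h.generate_img[OF closed] generate_A_B surj by (simp add: image_Un)
  next
    fix w :: "(bool \<times> _) list"
    assume w: "w \<noteq> [] \<and>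
      (\<forall>p \<in> set w. snd p \<noteq> \<one>\<^bsub>H\<^esub> \<and> snd p \<in> (if fst p then h ` A else h ` B)) \<and>
      (\<forall>i. Suc i < length w \<longrightarrow> fst (w ! i) \<noteq> fst (w ! Suc i))"
    let ?g = "inv_into (carrier G) h"
    define w' where "w' = map (\<lambda>(b, x). (b, ?g x)) w"
    have "syllable (fst p, ?g (snd p)) \<and> h (?g (snd p)) = snd p" if p: "p \<in> set w" for p
    proof -
      have "snd p \<in> h ` (if fst p then A else B)"
        using w p by auto
      then obtain a where a: "a \<in> (if fst p then A else B)" "snd p = h a"
        by blast
      then have "a \<in> carrier G"
        using closed by (auto split: if_splits)
      then show ?thesis
        using a w p inj by (auto simp: syllable_def)
    qed
    then have "reduced w'" "map h (map snd w') = map snd w"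
      using w by (auto simp: reduced_def w'_def distinct_adj_conv_nth split_beta)
    moreover have "w' \<noteq> []"
      using w by (simp add: w'_def)
    ultimately have "list_prod G (map snd w') \<noteq> \<one>\<^bsub>G\<^esub>"
      "h (list_prod G (map snd w')) = list_prod H (map snd w)"
      using reduced_word_eval_neq_one[of w'] h.hom_list_prod[of "map snd w'"] reduced_closed[of w']
      by (auto simp: word_eval_def)
    then show "list_prod H (map snd w) \<noteq> \<one>\<^bsub>H\<^esub>"
      using inj reduced_closed[OF \<open>reduced w'\<close>] inj_onD[OF inj, of _ "\<one>\<^bsub>G\<^esub>"] by fastforce
  qed
qed

locale free_product_lift = free_product G A B + H: group H
  for G :: "('g, 'b) monoid_scheme" (structure) and A B and H :: "('h, 'c) monoid_scheme" +
  fixes \<alpha> \<beta> :: "'g \<Rightarrow> 'h"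
  assumes hom_\<alpha>: "\<alpha> \<in> hom (G\<lparr>carrier := A\<rparr>) H"
    and hom_\<beta>: "\<beta> \<in> hom (G\<lparr>carrier := B\<rparr>) H"
begin

definition syllable_image :: "bool \<times> 'g \<Rightarrow> 'h" where
  "syllable_image p = (if fst p then \<alpha> (snd p) else \<beta> (snd p))"

definition lift_word :: "(bool \<times> 'g) list \<Rightarrow> 'h" where
  "lift_word w = list_prod H (map syllable_image w)"

definition lift :: "'g \<Rightarrow> 'h" where
  "lift x = lift_word (normal_form x)"

lemma group_hom_\<alpha>: "group_hom (G\<lparr>carrier := A\<rparr>) H \<alpha>"
  and group_hom_\<beta>: "group_hom (G\<lparr>carrier := B\<rparr>) H \<beta>"
  using hom_\<alpha> hom_\<beta> subgroup.subgroup_is_group[OF subgroup_A is_group]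
    subgroup.subgroup_is_group[OF subgroup_B is_group] H.is_group
  by (simp_all add: group_hom_def group_hom_axioms_def)

lemma syllable_image_closed: "syllable p \<Longrightarrow> syllable_image p \<in> carrier H"
  using hom_\<alpha> hom_\<beta> by (auto simp: syllable_def syllable_image_def hom_def split: if_splits)

lemma syllable_image_inv:
  "syllable p \<Longrightarrow> syllable_image (fst p, inv (snd p)) = inv\<^bsub>H\<^esub> syllable_image p"
  using group_hom.hom_inv[OF group_hom_\<alpha>] group_hom.hom_inv[OF group_hom_\<beta>]
    subgroup_A subgroup_B
  by (auto simp: syllable_def syllable_image_def split: if_splits)

lemma syllable_image_mult:
  assumes "syllable (b, c)" "syllable (b, d)"
  shows "syllable_image (b, c \<otimes> d) = syllable_image (b, c) \<otimes>\<^bsub>H\<^esub> syllable_image (b, d)"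
  using assms hom_mult[OF hom_\<alpha>, of c d] hom_mult[OF hom_\<beta>, of c d]
  by (auto simp: syllable_def syllable_image_def split: if_splits)

lemma lift_word_closed: "reduced u \<Longrightarrow> lift_word u \<in> carrier H"
  unfolding lift_word_def reduced_def by (intro H.list_prod_closed) (use syllable_image_closed in auto)

lemma lift_word_Nil [simp]: "lift_word [] = \<one>\<^bsub>H\<^esub>"
  and lift_word_Cons: "lift_word (p # u) = syllable_image p \<otimes>\<^bsub>H\<^esub> lift_word u"
  by (simp_all add: lift_word_def)

lemma lift_word_append:
  "reduced u \<Longrightarrow> reduced v \<Longrightarrow> lift_word (u @ v) = lift_word u \<otimes>\<^bsub>H\<^esub> lift_word v"
  using syllable_image_closed by (auto simp: lift_word_def reduced_def intro!: H.list_prod_append)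

lemma lift_word_word_inv: "reduced u \<Longrightarrow> lift_word (word_inv u) = inv\<^bsub>H\<^esub> lift_word u"
proof (induction u)
  case (Cons p u)
  then have "syllable p" "reduced u" "reduced [(fst p, inv (snd p))]"
    by (auto simp: reduced_Cons syllable_inv)
  with Cons.IH show ?case
    using reduced_word_inv[of u] syllable_image_closed[of p] lift_word_closed[of u]
    by (simp add: word_inv_Cons lift_word_append lift_word_Cons syllable_image_inv H.inv_mult_group)
qed simp

lemma lift_word_joins:
  assumes "joins P Q R" "reduced P" "reduced Q" "reduced R"
  shows "lift_word R = lift_word P \<otimes>\<^bsub>H\<^esub> lift_word Q"
  using assms(1) unfolding joins_def
proof
  assume "R = P @ Q"
  then show ?thesis
    using assms(2,3) by (simp add: lift_word_append)
next
  assume "\<exists>P' Q' b c d. P = P' @ [(b, c)] \<and> Q = (b, d) # Q' \<and> R = P' @ [(b, c \<otimes> d)] @ Q'"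
  then obtain P' Q' b c d where P: "P = P' @ [(b, c)]" and Q: "Q = (b, d) # Q'"
    and R: "R = P' @ (b, c \<otimes> d) # Q'"
    by auto
  have "reduced P'" "reduced Q'" "reduced [(b, c)]" "reduced ((b, c \<otimes> d) # Q')"
    "syllable (b, c)" "syllable (b, d)"
    using assms(2-4) unfolding P Q R by (auto simp: reduced_append reduced_Cons)
  then show ?thesis
    using assms(2-4) syllable_image_closed lift_word_closed
    unfolding P Q R by (simp add: lift_word_append lift_word_Cons syllable_image_mult H.m_assoc
        del: append_Cons)
qed

lemma lift_hom: "lift \<in> hom G H"
proof (rule homI)
  fix x y
  assume "x \<in> carrier G" "y \<in> carrier G"
  then obtain P Z Q where x: "normal_form x = P @ Z" and y: "normal_form y = word_inv Z @ Q"
    and xy: "joins P Q (normal_form (x \<otimes> y))"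
    by (rule normal_form_mult)
  have "reduced (P @ Z)" "reduced (word_inv Z @ Q)" "reduced (normal_form (x \<otimes> y))"
    using reduced_normal_form \<open>x \<in> carrier G\<close> \<open>y \<in> carrier G\<close> x y by (metis m_closed)+
  then have "reduced P" "reduced Z" "reduced Q" "reduced (normal_form (x \<otimes> y))"
    by (auto simp: reduced_append)
  then show "lift (x \<otimes> y) = lift x \<otimes>\<^bsub>H\<^esub> lift y"
    using lift_word_joins[OF xy] lift_word_closed reduced_word_inv
    unfolding lift_def x y
    by (simp add: lift_word_append lift_word_word_inv H.m_assoc del: H.r_inv H.Units_r_inv)
       (simp add: H.m_assoc[symmetric])
qed (simp add: lift_def lift_word_closed reduced_normal_form)

lemma lift_syllable: "syllable p \<Longrightarrow> lift (snd p) = syllable_image p"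
proof -
  assume "syllable p"
  then have "reduced [p]"
    by (simp add: reduced_Cons)
  then have "normal_form (snd p) = [p]"
    using normal_form_word_eval[of "[p]"] syllable_closed \<open>syllable p\<close> by (simp add: word_eval_Cons)
  then show ?thesis
    using syllable_image_closed \<open>syllable p\<close> by (simp add: lift_def lift_word_def)
qed

end

lemma (in free_product_lift) lift_eq_one:
  assumes "free_product H A' B'" "bij_betw \<alpha> A A'" "bij_betw \<beta> B B'"
    and "x \<in> carrier G" "lift x = \<one>\<^bsub>H\<^esub>"
  shows "x = \<one>"
proof -
  interpret H: free_product H A' B'
    by fact
  have nontrivial: "\<gamma> c \<in> C' - {\<one>\<^bsub>H\<^esub>}"
    if "bij_betw \<gamma> C C'" "\<gamma> \<one> = \<one>\<^bsub>H\<^esub>" "\<one> \<in> C" "c \<in> C - {\<one>}" for \<gamma> C C' c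
  proof -
    have "\<gamma> c \<in> C'"
      using bij_betwE[OF that(1)] that(4) by blast
    moreover have "\<gamma> c \<noteq> \<gamma> \<one>"
      using inj_on_contraD[OF bij_betw_imp_inj_on[OF that(1)], of c \<one>] that(3,4) by blast
    ultimately show ?thesis
      using that(2) by simp
  qed
  have "\<alpha> \<one> = \<one>\<^bsub>H\<^esub>" "\<beta> \<one> = \<one>\<^bsub>H\<^esub>"
    using group_hom.hom_one[OF group_hom_\<alpha>] group_hom.hom_one[OF group_hom_\<beta>] by simp_all
  then have "H.syllable (fst p, syllable_image p)" if "syllable p" for p
    using that nontrivial[OF assms(2)] nontrivial[OF assms(3)]
      subgroup.one_closed[OF subgroup_A] subgroup.one_closed[OF subgroup_B]
    unfolding syllable_def H.syllable_def syllable_image_def by (cases "fst p") auto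
  then have "H.reduced (map (\<lambda>p. (fst p, syllable_image p)) (normal_form x))"
    using reduced_normal_form[OF assms(4)] by (auto simp: reduced_def H.reduced_def comp_def)
  moreover have "H.word_eval (map (\<lambda>p. (fst p, syllable_image p)) (normal_form x)) = \<one>\<^bsub>H\<^esub>"
    using assms(5) by (simp add: H.word_eval_def lift_def lift_word_def comp_def)
  ultimately have "normal_form x = []"
    using H.reduced_word_eval_neq_one Nil_is_map_conv by metis
  then show ?thesis
    using word_eval_normal_form[OF assms(4)] by simp
qed

lemma (in free_product_lift) lift_surj:
  assumes "generate H (\<alpha> ` A \<union> \<beta> ` B) = carrier H"
  shows "lift ` carrier G = carrier H"
proof -
  interpret lift: group_hom G H lift
    using lift_hom by unfold_locales
  have "syllable_image (b, a) \<in> lift ` carrier G" if "a \<in> (if b then A else B)" for b a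
  proof (cases "a = \<one>")
    case True
    then have "syllable_image (b, a) = lift \<one>"
      using group_hom.hom_one[OF group_hom_\<alpha>] group_hom.hom_one[OF group_hom_\<beta>]
      by (simp add: syllable_image_def)
    then show ?thesis
      by blast
  next
    case False
    then have "syllable (b, a)"
      using that by (simp add: syllable_def)
    then have "syllable_image (b, a) = lift a" "a \<in> carrier G"
      using lift_syllable[of "(b, a)"] syllable_closed[of "(b, a)"] by simp_all
    then show ?thesis
      by blast
  qed
  from this[of _ True] this[of _ False] have "\<alpha> ` A \<union> \<beta> ` B \<subseteq> lift ` carrier G"
    by (auto simp: syllable_image_def)
  then have "generate H (\<alpha> ` A \<union> \<beta> ` B) \<subseteq> lift ` carrier G"
    by (rule H.generate_subgroup_incl[OF _ lift.img_is_subgroup])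
  then show ?thesis
    using assms lift.hom_closed by auto
qed

lemma (in free_product) is_iso_free_products:
  assumes "free_product H A' B'"
    and "\<alpha> \<in> hom (G\<lparr>carrier := A\<rparr>) H" "bij_betw \<alpha> A A'"
    and "\<beta> \<in> hom (G\<lparr>carrier := B\<rparr>) H" "bij_betw \<beta> B B'"
  shows "G \<cong> H"
proof -
  interpret H: free_product H A' B'
    by fact
  interpret free_product_lift G A B H \<alpha> \<beta>
    using assms(2,4) by unfold_locales
  interpret lift: group_hom G H lift
    using lift_hom by unfold_locales
  have "lift ` carrier G = carrier H"
    using lift_surj assms(3,5) H.generate_A_B by (simp add: bij_betw_def)
  then have "lift \<in> iso G H"
    using lift_eq_one[OF assms(1,3,5)] by (simp add: lift.iso_iff)
  then show ?thesis
    by (rule is_isoI)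
qed

lemma involution_hom:
  assumes "group G" "group H" "s \<in> carrier G" "s \<noteq> \<one>\<^bsub>G\<^esub>" "s \<otimes>\<^bsub>G\<^esub> s = \<one>\<^bsub>G\<^esub>"
    and "t \<in> carrier H" "t \<otimes>\<^bsub>H\<^esub> t = \<one>\<^bsub>H\<^esub>"
  shows "(\<lambda>x. if x = s then t else \<one>\<^bsub>H\<^esub>) \<in> hom (G\<lparr>carrier := {\<one>\<^bsub>G\<^esub>, s}\<rparr>) H"
proof -
  interpret G: group G by fact
  interpret H: group H by fact
  show ?thesis
    using assms(3-7) by (auto intro!: homI)
qed

section \<open>The infinite dihedral group\<close>

lemma (in group) subgroup_involution:
  assumes "s \<in> carrier G" "s \<otimes> s = \<one>"
  shows "subgroup {\<one>, s} G"
proof -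
  have "inv s = s"
    using assms inv_equality by blast
  then show ?thesis
    using assms by (auto intro!: subgroupI)
qed

lemma inf_dihedral_mult [simp]:
  "(s, a) \<otimes>\<^bsub>inf_dihedral\<^esub> (t, b) = (s \<noteq> t, a + (if s then - b else b))"
  and inf_dihedral_one [simp]: "\<one>\<^bsub>inf_dihedral\<^esub> = (False, 0)"
  and carrier_inf_dihedral [simp]: "carrier inf_dihedral = UNIV"
  by (simp_all add: inf_dihedral_def)

lemma group_inf_dihedral: "group inf_dihedral"
proof (rule groupI)
  fix x y z :: "bool \<times> int"
  show "x \<otimes>\<^bsub>inf_dihedral\<^esub> y \<otimes>\<^bsub>inf_dihedral\<^esub> z = x \<otimes>\<^bsub>inf_dihedral\<^esub> (y \<otimes>\<^bsub>inf_dihedral\<^esub> z)"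
    by (cases x, cases y, cases z) auto
  show "\<one>\<^bsub>inf_dihedral\<^esub> \<otimes>\<^bsub>inf_dihedral\<^esub> x = x"
    by (cases x) simp
  show "\<exists>y \<in> carrier inf_dihedral. y \<otimes>\<^bsub>inf_dihedral\<^esub> x = \<one>\<^bsub>inf_dihedral\<^esub>"
  proof (cases x)
    case (Pair s a)
    show ?thesis
      by (rule bexI[of _ "(s, if s then a else - a)"]) (simp_all add: Pair)
  qed
qed auto

text \<open>The reflections \<open>x \<mapsto> -x\<close> and \<open>x \<mapsto> 1 - x\<close>, which generate \<open>D\<^sub>\<infinity>\<close> freely as
  \<open>\<int>\<^sub>2 * \<int>\<^sub>2\<close>.\<close>

definition reflection :: "bool \<Rightarrow> bool \<times> int" where
  "reflection b = (True, if b then 0 else 1)"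

fun alternating :: "bool \<Rightarrow> nat \<Rightarrow> bool list" where
  "alternating b 0 = []"
| "alternating b (Suc n) = b # alternating (\<not> b) n"

lemma list_prod_reflections:
  "list_prod inf_dihedral (map reflection (alternating b n)) =
     (odd n, if b then - int (n div 2) else int ((n + 1) div 2))"
  by (induction n arbitrary: b) (auto simp: reflection_def)

lemma inf_dihedral_eq_list_prod_reflections:
  "\<exists>b n. d = list_prod inf_dihedral (map reflection (alternating b n))"
proof -
  obtain s a where d: "d = (s, a)"
    by fastforce
  have "d = (odd n, if b then - int (n div 2) else int ((n + 1) div 2))"
    if "n = (if s then 1 else 0) + 2 * nat (if a \<le> 0 then - a else if s then a - 1 else a)"
      "b \<longleftrightarrow> a \<le> 0" for b n
    using that d by auto
  then show ?thesis
    unfolding list_prod_reflections by blast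
qed

lemma alternating_eq: "distinct_adj bs \<Longrightarrow> bs = alternating (hd bs) (length bs)"
  by (induction bs) (auto simp: distinct_adj_Cons)

lemma list_prod_reflections_neq_one:
  "n \<noteq> 0 \<Longrightarrow> list_prod inf_dihedral (map reflection (alternating b n)) \<noteq> \<one>\<^bsub>inf_dihedral\<^esub>"
  by (auto simp: list_prod_reflections elim!: evenE)

lemma generate_reflections: "generate inf_dihedral (range reflection) = carrier inf_dihedral"
proof (intro equalityI subsetI)
  interpret D: group inf_dihedral
    by (rule group_inf_dihedral)
  fix d :: "bool \<times> int"
  obtain b n where "d = list_prod inf_dihedral (map reflection (alternating b n))"
    using inf_dihedral_eq_list_prod_reflections by blast
  then show "d \<in> generate inf_dihedral (range reflection)"
    using D.list_prod_in_generate[of "map reflection (alternating b n)" "range reflection"]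
    by (auto intro: generate.incl)
qed simp

lemma inf_dihedral_free_product:
  "free_product_decomp inf_dihedral {(False, 0), reflection True} {(False, 0), reflection False}"
  unfolding free_product_decomp_def
proof (intro conjI allI impI)
  interpret D: group inf_dihedral
    by (rule group_inf_dihedral)
  have "subgroup {(False, 0), reflection b} inf_dihedral" for b
    using D.subgroup_involution[of "reflection b"] by (simp add: reflection_def)
  then show "subgroup {(False, 0), reflection True} inf_dihedral"
    "subgroup {(False, 0), reflection False} inf_dihedral"
    by blast+
  have "range reflection \<subseteq> {(False, 0), reflection True} \<union> {(False, 0), reflection False}"
    by (auto simp: UNIV_bool)
  then have "generate inf_dihedral (range reflection) \<subseteq>
      generate inf_dihedral ({(False, 0), reflection True} \<union> {(False, 0), reflection False})"
    by (rule D.mono_generate)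
  then show "generate inf_dihedral ({(False, 0), reflection True} \<union> {(False, 0), reflection False}) =
      carrier inf_dihedral"
    using generate_reflections by auto
next
  fix w :: "(bool \<times> bool \<times> int) list"
  assume w: "w \<noteq> [] \<and>
    (\<forall>p \<in> set w. snd p \<noteq> \<one>\<^bsub>inf_dihedral\<^esub> \<and>
       snd p \<in> (if fst p then {(False, 0), reflection True} else {(False, 0), reflection False})) \<and>
    (\<forall>i. Suc i < length w \<longrightarrow> fst (w ! i) \<noteq> fst (w ! Suc i))"
  then have "snd p = reflection (fst p)" if "p \<in> set w" for p
    using that by (cases "fst p") auto
  then have "map snd w = map reflection (map fst w)"
    by (simp add: map_eq_conv)
  also have "map fst w = alternating (fst (hd w)) (length w)"
    using w alternating_eq[of "map fst w"] by (simp add: distinct_adj_conv_nth hd_map)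
  finally show "list_prod inf_dihedral (map snd w) \<noteq> \<one>\<^bsub>inf_dihedral\<^esub>"
    using w list_prod_reflections_neq_one by simp
qed

lemma (in free_product) iso_inf_dihedral:
  assumes "A = {\<one>, s}" "s \<noteq> \<one>" "s \<otimes> s = \<one>" "B = {\<one>, t}" "t \<noteq> \<one>" "t \<otimes> t = \<one>"
  shows "G \<cong> inf_dihedral"
proof -
  have D: "free_product inf_dihedral {(False, 0), reflection True} {(False, 0), reflection False}"
    using group_inf_dihedral inf_dihedral_free_product by (rule free_productI)
  have closed: "s \<in> carrier G" "t \<in> carrier G"
    using assms subgroup.mem_carrier[OF subgroup_A] subgroup.mem_carrier[OF subgroup_B] by auto
  define \<alpha> :: "bool \<Rightarrow> 'g \<Rightarrow> 'g \<Rightarrow> bool \<times> int" where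
    "\<alpha> b u = (\<lambda>x. if x = u then reflection b else \<one>\<^bsub>inf_dihedral\<^esub>)" for b u
  have "\<alpha> b u \<in> hom (G\<lparr>carrier := {\<one>, u}\<rparr>) inf_dihedral"
    "bij_betw (\<alpha> b u) {\<one>, u} {(False, 0), reflection b}"
    if "u \<in> carrier G" "u \<noteq> \<one>" "u \<otimes> u = \<one>" for u b
    using that involution_hom[OF is_group group_inf_dihedral, of u "reflection b"]
    by (auto simp: \<alpha>_def reflection_def bij_betw_def inj_on_def)
  then show ?thesis
    using is_iso_free_products[OF D, of "\<alpha> True s" "\<alpha> False t"] closed assms by simp
qed

lemma (in free_product) iso_inf_dihedral_if_gen_torsion:
  assumes "A \<noteq> {\<one>}" "B \<noteq> {\<one>}" "\<forall>g \<in> carrier G. g \<noteq> \<one> \<longrightarrow> gen_torsion G g"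
  shows "G \<cong> inf_dihedral"
proof -
  interpret BA: free_product G B A
    by (rule free_productI[OF is_group free_product_decomp_swap[OF free_product_decomp]])
  obtain s t where "s \<in> A" "s \<noteq> \<one>" "t \<in> B" "t \<noteq> \<one>"
    using assms(1,2) subgroup.one_closed[OF subgroup_A] subgroup.one_closed[OF subgroup_B] by blast
  then show ?thesis
    using iso_inf_dihedral factor_order_two[OF assms(2,3)] BA.factor_order_two[OF assms(1,3)]
    by blast
qed

lemma iso_inf_dihedral_free_product:
  assumes "group G" "G \<cong> inf_dihedral"
  shows "\<exists>A B. free_product_decomp G A B \<and> A \<noteq> {\<one>\<^bsub>G\<^esub>} \<and> B \<noteq> {\<one>\<^bsub>G\<^esub>}"
proof -
  obtain h where h: "h \<in> iso inf_dihedral G"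
    using group.iso_sym[OF assms] unfolding is_iso_def by blast
  interpret h: group_hom inf_dihedral G h
    using h assms(1) group_inf_dihedral by (simp add: group_hom_def group_hom_axioms_def iso_iff)
  have "h (reflection b) \<noteq> \<one>\<^bsub>G\<^esub>" for b
    using h by (auto simp: h.iso_iff reflection_def)
  then have "h ` {(False, 0), reflection b} \<noteq> {\<one>\<^bsub>G\<^esub>}" for b
    by auto
  then show ?thesis
    using free_product_decomp_iso[OF inf_dihedral_free_product h group_inf_dihedral assms(1)] by blast
qed

theorem theorem1p6:
  fixes G :: "('g, 'b) monoid_scheme"
  assumes "group G"
    and "fin_gen G"
    and "\<forall>g \<in> carrier G. g \<noteq> \<one>\<^bsub>G\<^esub> \<longrightarrow> gen_torsion G g"
  shows "(\<exists>A B. free_product_decomp G A B \<and> A \<noteq> {\<one>\<^bsub>G\<^esub>} \<and> B \<noteq> {\<one>\<^bsub>G\<^esub>})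
         \<longleftrightarrow> G \<cong> inf_dihedral"
proof
  assume "\<exists>A B. free_product_decomp G A B \<and> A \<noteq> {\<one>\<^bsub>G\<^esub>} \<and> B \<noteq> {\<one>\<^bsub>G\<^esub>}"
  then obtain A B where "free_product_decomp G A B" "A \<noteq> {\<one>\<^bsub>G\<^esub>}" "B \<noteq> {\<one>\<^bsub>G\<^esub>}"
    by blast
  then show "G \<cong> inf_dihedral"
    using free_product.iso_inf_dihedral_if_gen_torsion[OF free_productI] assms(1,3) by blast
next
  assume "G \<cong> inf_dihedral"
  then show "\<exists>A B. free_product_decomp G A B \<and> A \<noteq> {\<one>\<^bsub>G\<^esub>} \<and> B \<noteq> {\<one>\<^bsub>G\<^esub>}"
    using iso_inf_dihedral_free_product assms(1) by blast
qed

end
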